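(* Consider the binary CA-RRM with affine indices $s_f(A)=\alpha_f+\beta_f^\top\psi(A)$, $f\in\mathcal F$, normalized by $(\alpha_{f_0},\beta_{f_0})=(0,0)$ for a baseline rule $f_0\in\mathcal F$, and with $p(A)\in(0,1)$ for all menus in the support. Let $d=\dim\psi$. Suppose there exist $d+1$ feature values $x^{(0)},\dots,x^{(d)}\in\mathbb R^d$ such that: (G1) for each $k\in\{0,\dots,d\}$ there exist menus $A_{k1},\dots,A_{kM_k}$ with $\psi(A_{km})=x^{(k)}$ for all $m$, such that the $M_k\times|\mathcal F|$ matrix $H^{(k)}$ with rows $h(A_{k1})^\top,\dots,h(A_{kM_k})^\top$ has rank $|\mathcal F|-1$; (G2) the $(d+1)\times(d+1)$ matrix $X$ whose $k$-th row is $(1,(x^{(k)})^\top)$ has full rank $d+1$. Then the parameter vector $\{(\alpha_f,\beta_f)\}_{f\in\mathcal F}$ is globally identified from the population objects $\{p(A),\kappa^L(A),\kappa^R(A),\psi(A)\}$: any two normalized parameter vectors that generate, via the model, the same choice probabilities $p(A_{km})$ at all menus $A_{km}$ coincide.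
   Context: Binary choice setting. $\mathcal F$ is a finite set of rules, menus $A=\{L^1,L^2\}$. Each rule $f$ has deterministic decisive-side indicators $\kappa_f^L(A),\kappa_f^R(A)\in\{0,1\}$ (not both 1), indicating that $f$ is decisive and recommends the left, respectively right, option at $A$; $\mathcal I_L(A)=\{f:\kappa_f^L(A)=1\}$, $\mathcal I_R(A)=\{f:\kappa_f^R(A)=1\}$. $\psi$ maps menus to $\mathbb R^d$. The model specifies the probability of choosing $L^1$ as $$p(A)=\frac{\sum_{f}\kappa_f^L(A)\,\omega_f(\psi(A))}{\sum_{f}(\kappa_f^L(A)+\kappa_f^R(A))\,\omega_f(\psi(A))},\qquad \omega_f(x):=\exp(\alpha_f+\beta_f^\top x),$$ for menus where both $\mathcal I_L(A),\mathcal I_R(A)$ are nonempty. For such menus, $r(A):=p(A)/(1-p(A))$ and $h(A)\in\mathbb R^{|\mathcal F|}$ has entries $h_f(A)=\kappa_f^L(A)-r(A)\kappa_f^R(A)$. The menus $A_{km}$ in (G1) are assumed two-sided. *)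

theory Defs
  imports "HOL-Analysis.Analysis"
begin

text \<open>Binary CA-RRM. Rules form the finite type 'f (the set F = UNIV),
  menus have type 'm, features psi A :: real^'d. Indicators kappaL/kappaR are
  booleans (1 = True).\<close>

definition weight :: "('f \<Rightarrow> real) \<Rightarrow> ('f \<Rightarrow> real^'d) \<Rightarrow> 'f \<Rightarrow> real^'d \<Rightarrow> real" where
  "weight \<alpha> \<beta> f x = exp (\<alpha> f + \<beta> f \<bullet> x)"

definition choice_prob ::
  "('f::finite \<Rightarrow> 'm \<Rightarrow> bool) \<Rightarrow> ('f \<Rightarrow> 'm \<Rightarrow> bool) \<Rightarrow> ('m \<Rightarrow> real^'d)
   \<Rightarrow> ('f \<Rightarrow> real) \<Rightarrow> ('f \<Rightarrow> real^'d) \<Rightarrow> 'm \<Rightarrow> real" where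
  "choice_prob kL kR \<psi> \<alpha> \<beta> A =
     (\<Sum>f\<in>UNIV. of_bool (kL f A) * weight \<alpha> \<beta> f (\<psi> A)) /
     (\<Sum>f\<in>UNIV. (of_bool (kL f A) + of_bool (kR f A)) * weight \<alpha> \<beta> f (\<psi> A))"

definition two_sided :: "('f \<Rightarrow> 'm \<Rightarrow> bool) \<Rightarrow> ('f \<Rightarrow> 'm \<Rightarrow> bool) \<Rightarrow> 'm \<Rightarrow> bool" where
  "two_sided kL kR A \<longleftrightarrow> (\<exists>f. kL f A) \<and> (\<exists>f. kR f A)"

definition odds :: "('m \<Rightarrow> real) \<Rightarrow> 'm \<Rightarrow> real" where
  "odds p A = p A / (1 - p A)"

definition hvec :: "('f::finite \<Rightarrow> 'm \<Rightarrow> bool) \<Rightarrow> ('f \<Rightarrow> 'm \<Rightarrow> bool) \<Rightarrow> ('m \<Rightarrow> real) \<Rightarrow> 'm \<Rightarrow> real^'f" where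
  "hvec kL kR p A = (\<chi> f. of_bool (kL f A) - odds p A * of_bool (kR f A))"

text \<open>The (d+1)x(d+1) matrix X with k-th row (1, x^(k)); the index type 'd option
  has d+1 elements, None being the constant column.\<close>
definition design_matrix :: "('d option \<Rightarrow> real^'d) \<Rightarrow> real^('d::finite option)^('d option)" where
  "design_matrix x = (\<chi> k j. case j of None \<Rightarrow> 1 | Some i \<Rightarrow> x k $ i)"

end

theory Submission
  imports Defs
begin

text \<open>At a menu A with both sides decisive, the model says that the odds r(A) equal the ratio
  of left-decisive to right-decisive total weight, i.e. h(A) is orthogonal to the weight vector
  (exp s_f(A))_f. Under (G1) the vectors h(A_km) span a hyperplane, so at each feature value x^(k)
  the weight vectors of two generating parameters are proportional, and the baseline weight
  exp 0 = 1 makes them equal. Hence the affine indices agree at the d + 1 points x^(k), and (G2)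
  forces equal coefficients.\<close>

lemma orthogonal_comp_span: "(span S)\<^sup>\<bottom> = S\<^sup>\<bottom>"
proof
  show "(span S)\<^sup>\<bottom> \<subseteq> S\<^sup>\<bottom>"
    by (simp add: orthogonal_comp_anti_mono span_superset)
  show "S\<^sup>\<bottom> \<subseteq> (span S)\<^sup>\<bottom>"
  proof
    fix v assume v: "v \<in> S\<^sup>\<bottom>"
    have "orthogonal u v" if "u \<in> span S" for u
      using that by (induction rule: span_induct_alt)
        (use v in \<open>auto simp: orthogonal_comp_def orthogonal_def inner_add_left\<close>)
    then show "v \<in> (span S)\<^sup>\<bottom>"
      by (simp add: orthogonal_comp_def)
  qed
qed

lemma dim_orthogonal_comp:
  fixes S :: "'a::euclidean_space set"
  shows "dim (S\<^sup>\<bottom>) + dim S = DIM('a)"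
proof -
  have "dim ((span S)\<^sup>\<bottom>) + dim (span S) = dim (UNIV :: 'a set)"
    using dim_subspace_orthogonal_to_vectors [of "span S" UNIV]
    by (simp add: orthogonal_comp_def)
  then show ?thesis
    by (simp add: orthogonal_comp_span)
qed

lemma orthogonal_comp_hyperplane_collinear:
  fixes S :: "'a::euclidean_space set"
  assumes "dim S = DIM('a) - 1" and "w \<in> S\<^sup>\<bottom>" "w' \<in> S\<^sup>\<bottom>" "w \<noteq> 0"
  obtains c where "w' = c *\<^sub>R w"
proof -
  have "dim (S\<^sup>\<bottom>) = 1"
    using dim_orthogonal_comp [of S] assms(1) DIM_positive [where 'a='a] by linarith
  then have "S\<^sup>\<bottom> \<subseteq> span {w}"
    using card_eq_dim [of "{w}" "S\<^sup>\<bottom>"] assms(2,4) by simp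
  then show thesis
    using assms(3) that by (auto simp: span_singleton)
qed

lemma sum_indicator_weight_pos:
  fixes P :: "'f::finite \<Rightarrow> bool"
  assumes "\<exists>f. P f"
  shows "0 < (\<Sum>f\<in>UNIV. of_bool (P f) * weight \<alpha> \<beta> f y)"
proof -
  obtain g where "P g" using assms by blast
  have "0 < of_bool (P g) * weight \<alpha> \<beta> g y"
    using \<open>P g\<close> by (simp add: weight_def)
  also have "\<dots> \<le> (\<Sum>f\<in>UNIV. of_bool (P f) * weight \<alpha> \<beta> f y)"
    by (rule member_le_sum) (auto simp: weight_def)
  finally show ?thesis .
qed

lemma odds_choice_prob:
  assumes "two_sided kL kR A"
  shows "odds (choice_prob kL kR \<psi> \<alpha> \<beta>) A =
    (\<Sum>f\<in>UNIV. of_bool (kL f A) * weight \<alpha> \<beta> f (\<psi> A)) /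
    (\<Sum>f\<in>UNIV. of_bool (kR f A) * weight \<alpha> \<beta> f (\<psi> A))"
proof -
  define L where "L = (\<Sum>f\<in>UNIV. of_bool (kL f A) * weight \<alpha> \<beta> f (\<psi> A))"
  define R where "R = (\<Sum>f\<in>UNIV. of_bool (kR f A) * weight \<alpha> \<beta> f (\<psi> A))"
  have "0 < L" "0 < R"
    unfolding L_def R_def
    by (rule sum_indicator_weight_pos, use assms in \<open>simp add: two_sided_def\<close>)+
  have "choice_prob kL kR \<psi> \<alpha> \<beta> A = L / (L + R)"
    by (simp add: choice_prob_def L_def R_def distrib_right sum.distrib)
  moreover have "1 - L / (L + R) = R / (L + R)"
    using \<open>0 < L\<close> \<open>0 < R\<close> by (simp add: field_simps)
  ultimately have "odds (choice_prob kL kR \<psi> \<alpha> \<beta>) A = (L / (L + R)) / (R / (L + R))"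
    by (simp add: odds_def)
  also have "\<dots> = L / R"
    using \<open>0 < L\<close> \<open>0 < R\<close> by simp
  finally have "odds (choice_prob kL kR \<psi> \<alpha> \<beta>) A = L / R" .
  then show ?thesis
    by (simp add: L_def R_def)
qed

lemma hvec_orthogonal_weights:
  assumes "two_sided kL kR A" and "choice_prob kL kR \<psi> \<alpha> \<beta> A = p A"
  shows "hvec kL kR p A \<bullet> (\<chi> f. weight \<alpha> \<beta> f (\<psi> A)) = 0"
proof -
  define L where "L = (\<Sum>f\<in>UNIV. of_bool (kL f A) * weight \<alpha> \<beta> f (\<psi> A))"
  define R where "R = (\<Sum>f\<in>UNIV. of_bool (kR f A) * weight \<alpha> \<beta> f (\<psi> A))"
  have "odds p A = odds (choice_prob kL kR \<psi> \<alpha> \<beta>) A"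
    using assms(2) by (simp add: odds_def)
  then have "odds p A = L / R"
    using odds_choice_prob [OF assms(1)] by (simp add: L_def R_def)
  moreover have "0 < R"
    unfolding R_def
    by (rule sum_indicator_weight_pos) (use assms(1) in \<open>simp add: two_sided_def\<close>)
  moreover have "hvec kL kR p A \<bullet> (\<chi> f. weight \<alpha> \<beta> f (\<psi> A)) = L - odds p A * R"
    unfolding hvec_def inner_vec_def L_def R_def sum_distrib_left sum_subtractf [symmetric]
    by (rule sum.cong) (simp_all add: algebra_simps)
  ultimately show ?thesis
    by simp
qed

lemma weights_identified_at_feature:
  fixes kL kR :: "'f::finite \<Rightarrow> 'm \<Rightarrow> bool"
  assumes two_sided: "\<And>A. A \<in> M \<Longrightarrow> two_sided kL kR A"
    and feature: "\<And>A. A \<in> M \<Longrightarrow> \<psi> A = y"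
    and gen: "\<And>A. A \<in> M \<Longrightarrow> choice_prob kL kR \<psi> \<alpha> \<beta> A = p A"
    and gen': "\<And>A. A \<in> M \<Longrightarrow> choice_prob kL kR \<psi> \<alpha>' \<beta>' A = p A"
    and rank: "dim (hvec kL kR p ` M) = CARD('f) - 1"
    and base: "weight \<alpha> \<beta> g y = weight \<alpha>' \<beta>' g y"
  shows "weight \<alpha> \<beta> f y = weight \<alpha>' \<beta>' f y"
proof -
  define w where "w = (\<chi> f. weight \<alpha> \<beta> f y)"
  define w' where "w' = (\<chi> f. weight \<alpha>' \<beta>' f y)"
  have "hvec kL kR p A \<bullet> w = 0" "hvec kL kR p A \<bullet> w' = 0" if "A \<in> M" for A
    using hvec_orthogonal_weights [where p = p, OF two_sided [OF that] gen [OF that]]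
      hvec_orthogonal_weights [where p = p, OF two_sided [OF that] gen' [OF that]] feature [OF that]
    by (simp_all add: w_def w'_def)
  then have orth: "w \<in> (hvec kL kR p ` M)\<^sup>\<bottom>" "w' \<in> (hvec kL kR p ` M)\<^sup>\<bottom>"
    by (auto simp: orthogonal_comp_def orthogonal_def)
  have "w $ g \<noteq> 0"
    by (simp add: w_def weight_def)
  then have "w \<noteq> 0"
    by auto
  moreover have "dim (hvec kL kR p ` M) = DIM(real^'f) - 1"
    using rank by simp
  ultimately obtain c where c: "w' = c *\<^sub>R w"
    using orth by (elim orthogonal_comp_hyperplane_collinear)
  have "w' $ g = c * w $ g"
    using c by simp
  then have "weight \<alpha>' \<beta>' g y = c * weight \<alpha> \<beta> g y"
    by (simp add: w_def w'_def)
  then have "c = 1"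
    using base by (simp add: weight_def)
  then show ?thesis
    using c by (simp add: w_def w'_def vec_eq_iff)
qed

definition affine_coeffs :: "real \<Rightarrow> real^'d \<Rightarrow> real^('d::finite option)" where
  "affine_coeffs a b = (\<chi> j. case j of None \<Rightarrow> a | Some i \<Rightarrow> b $ i)"

lemma design_matrix_mult_affine_coeffs:
  "design_matrix x *v affine_coeffs a b = (\<chi> k. a + b \<bullet> x k)"
  by (simp add: vec_eq_iff matrix_vector_mult_def design_matrix_def affine_coeffs_def
      UNIV_option_conv sum.reindex inner_vec_def mult.commute)

lemma affine_coeffs_eq_0_iff [simp]: "affine_coeffs a b = 0 \<longleftrightarrow> a = 0 \<and> b = 0"
  by (auto simp: affine_coeffs_def vec_eq_iff split: option.splits)

lemma affine_functions_eq_on_design_points: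
  fixes x :: "'d option \<Rightarrow> real^'d::finite"
  assumes "rank (design_matrix x) = CARD('d option)"
    and "\<And>k. a + b \<bullet> x k = a' + b' \<bullet> x k"
  shows "a = a' \<and> b = b'"
proof -
  have "design_matrix x *v affine_coeffs (a - a') (b - b') = 0"
    using assms(2) by (simp add: design_matrix_mult_affine_coeffs vec_eq_iff inner_diff_left)
      (metis add_diff_add diff_self)
  then have "affine_coeffs (a - a') (b - b') = 0"
    using assms(1) matrix_nonfull_linear_equations_eq by blast
  then show ?thesis
    by simp
qed

theorem corollary1:
  fixes kL kR :: "'f::finite \<Rightarrow> 'm \<Rightarrow> bool"
    and \<psi> :: "'m \<Rightarrow> real^'d::finite"
    and p :: "'m \<Rightarrow> real"
    and f0 :: 'f
    and x :: "'d option \<Rightarrow> real^'d"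
    and Menus :: "'d option \<Rightarrow> 'm set"
    and \<alpha> \<alpha>' :: "'f \<Rightarrow> real"
    and \<beta> \<beta>' :: "'f \<Rightarrow> real^'d"
  assumes not_both: "\<And>f A. \<not> (kL f A \<and> kR f A)"
    and p_interior: "\<And>k A. A \<in> Menus k \<Longrightarrow> 0 < p A \<and> p A < 1"
    and G1_finite: "\<And>k. finite (Menus k) \<and> Menus k \<noteq> {}"
    and G1_feature: "\<And>k A. A \<in> Menus k \<Longrightarrow> \<psi> A = x k"
    and G1_two_sided: "\<And>k A. A \<in> Menus k \<Longrightarrow> two_sided kL kR A"
    and G1_rank: "\<And>k. dim (hvec kL kR p ` Menus k) = CARD('f) - 1"
    and G2: "rank (design_matrix x) = CARD('d option)"
    and norm1: "\<alpha> f0 = 0" "\<beta> f0 = 0"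
    and norm2: "\<alpha>' f0 = 0" "\<beta>' f0 = 0"
    and gen1: "\<And>k A. A \<in> Menus k \<Longrightarrow> choice_prob kL kR \<psi> \<alpha> \<beta> A = p A"
    and gen2: "\<And>k A. A \<in> Menus k \<Longrightarrow> choice_prob kL kR \<psi> \<alpha>' \<beta>' A = p A"
  shows "\<alpha> = \<alpha>' \<and> \<beta> = \<beta>'"
proof -
  have "\<alpha> f + \<beta> f \<bullet> x k = \<alpha>' f + \<beta>' f \<bullet> x k" for f k
  proof -
    have base: "weight \<alpha> \<beta> f0 (x k) = weight \<alpha>' \<beta>' f0 (x k)"
      using norm1 norm2 by (simp add: weight_def)
    have "weight \<alpha> \<beta> f (x k) = weight \<alpha>' \<beta>' f (x k)"
      by (rule weights_identified_at_feature [of "Menus k" kL kR \<psi> "x k" \<alpha> \<beta> p \<alpha>' \<beta>' f0])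
        (simp_all add: base G1_two_sided G1_feature gen1 gen2 G1_rank)
    then show ?thesis
      by (simp add: weight_def)
  qed
  then have "\<alpha> f = \<alpha>' f \<and> \<beta> f = \<beta>' f" for f
    using affine_functions_eq_on_design_points [OF G2] by blast
  then show ?thesis
    by auto
qed

end
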